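(* Let $\mathcal f:S\to T$ be a simulation with cut-off $\Delta>\min(H_T)$, physical spin assignment $P$ and decoding $\mathrm{dec}$, and let $\vec s$ be a ground state of $S$, i.e. $\vec s\in H_S^{-1}(\{\min H_S\})$. Then $\vec t=\mathrm{dec}\circ\vec s\circ P$ is a ground state of $T$.
   Context: A spin system $S=(q_S,V_S,E_S,J_S)$: integer $q_S\ge2$, finite set $V_S$, hyperedges $E_S\subseteq\mathcal P(V_S)$ covering $V_S$, $J_S(e):[q_S]^e\to\mathbb R_{\ge0}$. $\mathcal C_S=[q_S]^{V_S}$, $H_S(\vec s)=\sum_eJ_S(e)(\vec s|_e)$. A simulation $\mathcal f:S\to T$ consists of a cut-off $\Delta>0$, shift $\Gamma\in\mathbb R$, degeneracy $d\in\mathbb N$, $P:V_T\to V_S^k$ (components $P^{(i)}$), $\mathrm{dec}:[q_S]^k\to[q_T]$, and $\mathrm{enc}=(\mathrm{enc}_i:[q_T]\to[q_S]^k)_{i=1,\dots,m}$, satisfying: (1) $P^{(i)}(v)=P^{(j)}(w)\Rightarrow i=j,\ v=w$; (2) $\mathrm{dec}\circ\mathrm{enc}_i=\mathrm{id}$; (3) $\mathrm{enc}_i(t)=\mathrm{enc}_j(t)$ for some $t$ implies $i=j$; (4) with $\mathrm{sim}_i(\vec t)=\{\vec s\in\mathcal C_S:\vec s\circ P=\mathrm{enc}_i\circ\vec t,\ H_S(\vec s)-\Gamma<\Delta\}$, $|\mathrm{sim}_i(\vec t)|=d$ whenever $H_T(\vec t)<\Delta$; (5) $H_S(\vec s)-\Gamma=H_T(\vec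 t)$ for $\vec s\in\bigcup_i\mathrm{sim}_i(\vec t)$, and $H_S(\vec s)-\Gamma\ge\Delta$ for every $\vec s$ in no $\mathrm{sim}_i(\vec t)$. Here $(\vec s\circ P)(v)=(\vec s(P^{(1)}(v)),\dots,\vec s(P^{(k)}(v)))$, $(\mathrm{enc}_i\circ\vec t)(v)=\mathrm{enc}_i(\vec t(v))$, and $\mathrm{dec}\circ\vec s\circ P\in\mathcal C_T$ is $v\mapsto\mathrm{dec}((\vec s\circ P)(v))$. *)

theory Defs
  imports Complex_Main "HOL-Library.FuncSet"
begin

text \<open>Spin system S = (q, V, E, J). The spin values are [q] = {1..q}.
  Configurations are extensional functions V \<rightarrow> [q] (PiE).
  Tuples in [q]^k are represented as lists of length k.\<close>

record 'v spin_system =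
  sq :: nat
  sV :: "'v set"
  sE :: "'v set set"
  sJ :: "'v set \<Rightarrow> ('v \<Rightarrow> nat) \<Rightarrow> real"

definition spins :: "nat \<Rightarrow> nat set" where
  "spins q = {1..q}"

definition configs :: "('v, 'z) spin_system_scheme \<Rightarrow> ('v \<Rightarrow> nat) set" where
  "configs S = PiE (sV S) (\<lambda>_. spins (sq S))"

definition spin_system :: "('v, 'z) spin_system_scheme \<Rightarrow> bool" where
  "spin_system S \<longleftrightarrow>
     sq S \<ge> 2 \<and> finite (sV S) \<and> sE S \<subseteq> Pow (sV S) \<and> \<Union>(sE S) = sV S \<and>
     (\<forall>e\<in>sE S. \<forall>\<sigma>\<in>PiE e (\<lambda>_. spins (sq S)). sJ S e \<sigma> \<ge> 0)"

definition ham :: "('v, 'z) spin_system_scheme \<Rightarrow> ('v \<Rightarrow> nat) \<Rightarrow> real" where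
  "ham S s = (\<Sum>e\<in>sE S. sJ S e (restrict s e))"

definition ground_state :: "('v, 'z) spin_system_scheme \<Rightarrow> ('v \<Rightarrow> nat) \<Rightarrow> bool" where
  "ground_state S s \<longleftrightarrow> s \<in> configs S \<and> ham S s = Min (ham S ` configs S)"

text \<open>sim_i(t): P :: 'w \<Rightarrow> 'v list (the k physical spins of each target spin),
  enc :: nat \<Rightarrow> nat \<Rightarrow> nat list (enc i, for i \<in> {1..m}).\<close>

definition sim_set ::
  "('v, 'z) spin_system_scheme \<Rightarrow> ('w, 'y) spin_system_scheme \<Rightarrow> real \<Rightarrow> real \<Rightarrow>
   ('w \<Rightarrow> 'v list) \<Rightarrow> (nat \<Rightarrow> nat \<Rightarrow> nat list) \<Rightarrow> nat \<Rightarrow> ('w \<Rightarrow> nat) \<Rightarrow> ('v \<Rightarrow> nat) set" where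
  "sim_set S T \<Delta> \<Gamma> P enc i t =
     {s \<in> configs S. (\<forall>v\<in>sV T. map s (P v) = enc i (t v)) \<and> ham S s - \<Gamma> < \<Delta>}"

definition is_simulation ::
  "('v, 'z) spin_system_scheme \<Rightarrow> ('w, 'y) spin_system_scheme \<Rightarrow> real \<Rightarrow> real \<Rightarrow> nat \<Rightarrow> nat \<Rightarrow>
   ('w \<Rightarrow> 'v list) \<Rightarrow> (nat list \<Rightarrow> nat) \<Rightarrow> nat \<Rightarrow> (nat \<Rightarrow> nat \<Rightarrow> nat list) \<Rightarrow> bool" where
  "is_simulation S T \<Delta> \<Gamma> d k P dec m enc \<longleftrightarrow>
     spin_system S \<and> spin_system T \<and> \<Delta> > 0 \<and> d \<ge> 1 \<and> m \<ge> 1 \<and>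
     \<comment> \<open>typing: P : V_T \<rightarrow> V_S^k, dec : [q_S]^k \<rightarrow> [q_T], enc_i : [q_T] \<rightarrow> [q_S]^k\<close>
     (\<forall>v\<in>sV T. length (P v) = k \<and> set (P v) \<subseteq> sV S) \<and>
     (\<forall>xs. length xs = k \<and> set xs \<subseteq> spins (sq S) \<longrightarrow> dec xs \<in> spins (sq T)) \<and>
     (\<forall>i\<in>{1..m}. \<forall>t\<in>spins (sq T). length (enc i t) = k \<and> set (enc i t) \<subseteq> spins (sq S)) \<and>
     \<comment> \<open>(1)\<close>
     (\<forall>v\<in>sV T. \<forall>w\<in>sV T. \<forall>i<k. \<forall>j<k. P v ! i = P w ! j \<longrightarrow> i = j \<and> v = w) \<and>
     \<comment> \<open>(2)\<close>
     (\<forall>i\<in>{1..m}. \<forall>t\<in>spins (sq T). dec (enc i t) = t) \<and>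
     \<comment> \<open>(3)\<close>
     (\<forall>i\<in>{1..m}. \<forall>j\<in>{1..m}. (\<exists>t\<in>spins (sq T). enc i t = enc j t) \<longrightarrow> i = j) \<and>
     \<comment> \<open>(4)\<close>
     (\<forall>i\<in>{1..m}. \<forall>t\<in>configs T. ham T t < \<Delta> \<longrightarrow>
         card (sim_set S T \<Delta> \<Gamma> P enc i t) = d) \<and>
     \<comment> \<open>(5)\<close>
     (\<forall>t\<in>configs T. \<forall>i\<in>{1..m}. \<forall>s\<in>sim_set S T \<Delta> \<Gamma> P enc i t. ham S s - \<Gamma> = ham T t) \<and>
     (\<forall>s\<in>configs S. (\<forall>t\<in>configs T. \<forall>i\<in>{1..m}. s \<notin> sim_set S T \<Delta> \<Gamma> P enc i t) \<longrightarrow>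
         ham S s - \<Gamma> \<ge> \<Delta>)"

end

theory Submission
  imports Defs
begin

text \<open>A ground state t0 of T lies below the cut-off, so by (4) some configuration s0 of S
  simulates it, and by (5) H_S(s0) - \<Gamma> = H_T(t0). A ground state s of S satisfies
  H_S(s) \<le> H_S(s0), so s is below the cut-off as well; by (5) it then belongs to some sim_i(t),
  hence decodes to t by (2), and H_T(t) = H_S(s) - \<Gamma> \<le> H_T(t0) makes t a ground state.\<close>

lemma
  assumes "is_simulation S T \<Delta> \<Gamma> d k P dec m enc"
  shows simulation_spin_systems: "spin_system S" "spin_system T"
    and simulation_first_encoding: "1 \<in> {1..m}"
    and simulation_degeneracy_pos: "d \<ge> 1"
    and simulation_dec_enc: "\<And>i t. i \<in> {1..m} \<Longrightarrow> t \<in> spins (sq T) \<Longrightarrow> dec (enc i t) = t"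
    and simulation_card_sim_set: "\<And>i t. i \<in> {1..m} \<Longrightarrow> t \<in> configs T \<Longrightarrow> ham T t < \<Delta> \<Longrightarrow>
           card (sim_set S T \<Delta> \<Gamma> P enc i t) = d"
    and simulation_sim_set_energy: "\<And>i t s. t \<in> configs T \<Longrightarrow> i \<in> {1..m} \<Longrightarrow>
           s \<in> sim_set S T \<Delta> \<Gamma> P enc i t \<Longrightarrow> ham S s - \<Gamma> = ham T t"
    and simulation_low_energy_in_sim_set: "\<And>s. s \<in> configs S \<Longrightarrow> ham S s - \<Gamma> < \<Delta> \<Longrightarrow>
           \<exists>t\<in>configs T. \<exists>i\<in>{1..m}. s \<in> sim_set S T \<Delta> \<Gamma> P enc i t"
proof -
  note sim = assms[unfolded is_simulation_def]
  show "spin_system S" using sim by (elim conjE) assumption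
  show "spin_system T" using sim by (elim conjE) assumption
  show "d \<ge> 1" using sim by (elim conjE) assumption
  have "m \<ge> 1" using sim by (elim conjE) assumption
  then show "1 \<in> {1..m}" by simp
  have "\<forall>i\<in>{1..m}. \<forall>t\<in>spins (sq T). dec (enc i t) = t"
    using sim by (elim conjE) assumption
  then show "\<And>i t. i \<in> {1..m} \<Longrightarrow> t \<in> spins (sq T) \<Longrightarrow> dec (enc i t) = t" by blast
  have "\<forall>i\<in>{1..m}. \<forall>t\<in>configs T. ham T t < \<Delta> \<longrightarrow> card (sim_set S T \<Delta> \<Gamma> P enc i t) = d"
    using sim by (elim conjE) assumption
  then show "\<And>i t. i \<in> {1..m} \<Longrightarrow> t \<in> configs T \<Longrightarrow> ham T t < \<Delta> \<Longrightarrow>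
           card (sim_set S T \<Delta> \<Gamma> P enc i t) = d" by blast
  have "\<forall>t\<in>configs T. \<forall>i\<in>{1..m}. \<forall>s\<in>sim_set S T \<Delta> \<Gamma> P enc i t. ham S s - \<Gamma> = ham T t"
    using sim by (elim conjE) assumption
  then show "\<And>i t s. t \<in> configs T \<Longrightarrow> i \<in> {1..m} \<Longrightarrow>
           s \<in> sim_set S T \<Delta> \<Gamma> P enc i t \<Longrightarrow> ham S s - \<Gamma> = ham T t" by blast
  have "\<forall>s\<in>configs S. (\<forall>t\<in>configs T. \<forall>i\<in>{1..m}. s \<notin> sim_set S T \<Delta> \<Gamma> P enc i t) \<longrightarrow>
         ham S s - \<Gamma> \<ge> \<Delta>"
    using sim by (elim conjE) assumption
  then show "\<And>s. s \<in> configs S \<Longrightarrow> ham S s - \<Gamma> < \<Delta> \<Longrightarrow>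
           \<exists>t\<in>configs T. \<exists>i\<in>{1..m}. s \<in> sim_set S T \<Delta> \<Gamma> P enc i t"
    by (meson not_less)
qed

lemma configs_finite: "spin_system S \<Longrightarrow> finite (configs S)"
  unfolding spin_system_def configs_def spins_def by (auto intro: finite_PiE)

lemma configs_nonempty: "spin_system S \<Longrightarrow> configs S \<noteq> {}"
  unfolding spin_system_def configs_def spins_def by (simp add: PiE_eq_empty_iff)

lemma ground_state_iff_le:
  assumes "spin_system S"
  shows "ground_state S s \<longleftrightarrow> s \<in> configs S \<and> (\<forall>s'\<in>configs S. ham S s \<le> ham S s')"
  using configs_finite[OF assms] unfolding ground_state_def
  by (auto intro!: antisym Min_le Min.boundedI)

lemma ground_state_exists:
  assumes "spin_system S"
  obtains s where "ground_state S s"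
proof -
  have "Min (ham S ` configs S) \<in> ham S ` configs S"
    using configs_finite[OF assms] configs_nonempty[OF assms] by (intro Min_in) auto
  then show ?thesis using that unfolding ground_state_def by auto
qed

lemma low_energy_target_simulated:
  assumes sim: "is_simulation S T \<Delta> \<Gamma> d k P dec m enc" and "t \<in> configs T" "ham T t < \<Delta>"
  obtains s where "s \<in> configs S" "ham S s - \<Gamma> = ham T t"
proof -
  have "card (sim_set S T \<Delta> \<Gamma> P enc 1 t) \<ge> 1"
    using simulation_first_encoding[OF sim] simulation_degeneracy_pos[OF sim]
      simulation_card_sim_set[OF sim] assms(2,3) by simp
  then obtain s where "s \<in> sim_set S T \<Delta> \<Gamma> P enc 1 t"
    by (metis card.empty ex_in_conv not_one_le_zero)
  then show ?thesis
    using that simulation_first_encoding[OF sim] simulation_sim_set_energy[OF sim] assms(2)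
    by (auto simp: sim_set_def)
qed

lemma decode_sim_set:
  assumes sim: "is_simulation S T \<Delta> \<Gamma> d k P dec m enc"
    and t: "t \<in> configs T" and i: "i \<in> {1..m}" and s: "s \<in> sim_set S T \<Delta> \<Gamma> P enc i t"
  shows "restrict (\<lambda>v. dec (map s (P v))) (sV T) = t"
proof -
  have "dec (map s (P v)) = t v" if "v \<in> sV T" for v
  proof -
    have "map s (P v) = enc i (t v)" using s that by (simp add: sim_set_def)
    moreover have "t v \<in> spins (sq T)" using t that by (auto simp: configs_def)
    ultimately show ?thesis using simulation_dec_enc[OF sim i] by simp
  qed
  moreover have "t \<in> extensional (sV T)" using t by (simp add: configs_def PiE_def)
  ultimately show ?thesis by (auto simp: restrict_def extensional_def)
qed

theorem mainTheorem12:
  fixes S :: "('v, 'z) spin_system_scheme" and T :: "('w, 'y) spin_system_scheme"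
  assumes "is_simulation S T \<Delta> \<Gamma> d k P dec m enc"
    and "\<Delta> > Min (ham T ` configs T)"
    and "ground_state S s"
  shows "ground_state T (restrict (\<lambda>v. dec (map s (P v))) (sV T))"
proof -
  note S = simulation_spin_systems(1)[OF assms(1)] and T = simulation_spin_systems(2)[OF assms(1)]
  obtain t0 where t0: "ground_state T t0" using ground_state_exists[OF T] .
  then have "t0 \<in> configs T" "ham T t0 < \<Delta>"
    using assms(2) by (simp_all add: ground_state_def)
  then obtain s0 where s0: "s0 \<in> configs S" "ham S s0 - \<Gamma> = ham T t0"
    using low_energy_target_simulated[OF assms(1)] by blast
  have s: "s \<in> configs S" "ham S s \<le> ham S s0"
    using assms(3) s0(1) by (simp_all add: ground_state_iff_le[OF S])
  then have "ham S s - \<Gamma> < \<Delta>" using s0(2) \<open>ham T t0 < \<Delta>\<close> by linarith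
  then obtain t i where t: "t \<in> configs T" "i \<in> {1..m}" "s \<in> sim_set S T \<Delta> \<Gamma> P enc i t"
    using simulation_low_energy_in_sim_set[OF assms(1) s(1)] by blast
  have "ham T t \<le> ham T t0"
    using simulation_sim_set_energy[OF assms(1) t] s(2) s0(2) by linarith
  then have "ground_state T t"
    using t0 t(1) by (auto simp: ground_state_iff_le[OF T])
  then show ?thesis using decode_sim_set[OF assms(1) t] by simp
qed

end
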